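(* Let $d\ge 1$, $1\le r\le d$, and let $S(\cdot; r, d):\mathbb{R}^d\to\mathbb{R}$ be $S(x;r,d)=\frac{1}{\binom dr}\sum_{j=1}^{\binom dr} s(x;C(j,r,d))$. If $f_1,\dots,f_K$ is any order-$r$ functional decomposition of $S(\cdot; r, d)$, then $K \ge \binom{d}{r}$.
   Context: For $x\in\mathbb{R}^d$ and nonempty $A\subseteq\{1,\dots,d\}$, $s(x;A)=\max\{x_j:j\in A\}$; $C(k,r,d)$ is the $k$-th $r$-element subset of $\{1,\dots,d\}$ in lexicographic order. A function $f:\mathbb{R}^d\to\mathbb{R}$ has an order-$r$ functional decomposition $f_1,\dots,f_K$ if $f=\sum_{k=1}^K f_k$ and each $f_k:\mathbb{R}^d\to\mathbb{R}$ is a function of only $r$ of the coordinates (i.e. depends only on the coordinates indexed by some $r$-element subset of $\{1,\dots,d\}$). *)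

theory Defs
  imports Complex_Main "HOL-Library.List_Lexorder"
begin

text \<open>Points of R^d are modelled as functions nat => real; only the coordinates
  1..d are relevant (all functions below ignore the other coordinates).\<close>

definition smax :: "(nat \<Rightarrow> real) \<Rightarrow> nat set \<Rightarrow> real" where
  "smax x A = Max (x ` A)"

definition subsets_lex :: "nat \<Rightarrow> nat \<Rightarrow> nat list list" where
  "subsets_lex r d =
     sorted_list_of_set (sorted_list_of_set ` {A. A \<subseteq> {1..d} \<and> card A = r})"

definition C :: "nat \<Rightarrow> nat \<Rightarrow> nat \<Rightarrow> nat set" where
  "C k r d = set (subsets_lex r d ! (k - 1))"

definition S :: "(nat \<Rightarrow> real) \<Rightarrow> nat \<Rightarrow> nat \<Rightarrow> real" where
  "S x r d = (1 / real (d choose r)) * (\<Sum>j = 1..(d choose r). smax x (C j r d))"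

definition depends_only_on :: "((nat \<Rightarrow> real) \<Rightarrow> real) \<Rightarrow> nat set \<Rightarrow> bool" where
  "depends_only_on g A \<longleftrightarrow> (\<forall>x y. (\<forall>i\<in>A. x i = y i) \<longrightarrow> g x = g y)"

definition order_r_decomposition ::
  "nat \<Rightarrow> nat \<Rightarrow> ((nat \<Rightarrow> real) \<Rightarrow> real) \<Rightarrow> (nat \<Rightarrow> (nat \<Rightarrow> real) \<Rightarrow> real) \<Rightarrow> nat \<Rightarrow> bool" where
  "order_r_decomposition r d F f K \<longleftrightarrow>
     (\<forall>x. F x = (\<Sum>k = 1..K. f k x)) \<and>
     (\<forall>k \<in> {1..K}. \<exists>A. A \<subseteq> {1..d} \<and> card A = r \<and> depends_only_on (f k) A)"

end

theory Submission
  imports Defs "HOL-Library.Indicator_Function"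
begin

text \<open>For a set A of coordinates let \<open>\<Delta>\<^sub>A g\<close> be the alternating sum of g over the
  vertices \<open>1\<^sub>T\<close> (\<open>T \<subseteq> A\<close>) of the unit cube spanned by A, i.e. the mixed finite difference
  of g in all coordinates of A. It is linear in g and vanishes as soon as g ignores one
  coordinate of A, so \<open>\<Delta>\<^sub>A f\<^sub>k \<noteq> 0\<close> forces \<open>A \<subseteq> B\<^sub>k\<close> when \<open>f\<^sub>k\<close> depends only on the
  coordinates in \<open>B\<^sub>k\<close>. Among the summands \<open>s(\<cdot>;A')\<close> of S only \<open>A' = A\<close> itself has
  \<open>\<Delta>\<^sub>A \<noteq> 0\<close>, so \<open>\<Delta>\<^sub>A S \<noteq> 0\<close> for every r-set A. Hence every r-set A equals some \<open>B\<^sub>k\<close>,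
  and there are at least \<open>d choose r\<close> summands.\<close>

definition mixed_difference :: "((nat \<Rightarrow> real) \<Rightarrow> real) \<Rightarrow> nat set \<Rightarrow> real" where
  "mixed_difference g A = (\<Sum>T\<in>Pow A. (-1) ^ card T * g (indicator T))"

lemma mixed_difference_sum:
  "mixed_difference (\<lambda>x. \<Sum>k\<in>I. f k x) A = (\<Sum>k\<in>I. mixed_difference (f k) A)"
  unfolding mixed_difference_def by (simp add: sum_distrib_left sum.swap[of _ I])

lemma mixed_difference_cmult:
  "mixed_difference (\<lambda>x. c * g x) A = c * mixed_difference g A"
  unfolding mixed_difference_def by (simp add: sum_distrib_left mult.left_commute)

text \<open>Pair each \<open>T \<subseteq> A - {i}\<close> with \<open>insert i T\<close>: g takes the same value at both
  vertices, while the signs are opposite.\<close>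
lemma mixed_difference_eq_0_if_independent:
  assumes "finite A" "i \<in> A" "i \<notin> B" "depends_only_on g B"
  shows "mixed_difference g A = 0"
proof -
  define A' where "A' = A - {i}"
  have A: "A = insert i A'" and "finite A'" and "i \<notin> A'"
    using assms A'_def by auto
  have disjoint: "Pow A' \<inter> insert i ` Pow A' = {}"
    using \<open>i \<notin> A'\<close> by auto
  have inj: "inj_on (insert i) (Pow A')"
    using \<open>i \<notin> A'\<close> unfolding inj_on_def by (metis PowD Diff_insert_absorb subsetD)
  have flip: "(-1) ^ card (insert i T) * g (indicator (insert i T))
      = - ((-1) ^ card T * g (indicator T))" if "T \<in> Pow A'" for T
  proof -
    have "finite T" "i \<notin> T"
      using that \<open>finite A'\<close> \<open>i \<notin> A'\<close> finite_subset by auto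
    moreover have "\<forall>j\<in>B. indicator (insert i T) j = (indicator T j :: real)"
      using assms(3) by (auto simp: indicator_def)
    then have "g (indicator (insert i T)) = g (indicator T)"
      using assms(4) unfolding depends_only_on_def by blast
    ultimately show ?thesis
      by simp
  qed
  have "mixed_difference g A = (\<Sum>T\<in>Pow A'. (-1) ^ card T * g (indicator T))
      + (\<Sum>T\<in>insert i ` Pow A'. (-1) ^ card T * g (indicator T))"
    unfolding mixed_difference_def A Pow_insert
    using \<open>finite A'\<close> disjoint by (simp add: sum.union_disjoint)
  also have "(\<Sum>T\<in>insert i ` Pow A'. (-1) ^ card T * g (indicator T))
      = (\<Sum>T\<in>Pow A'. - ((-1) ^ card T * g (indicator T)))"
    using inj flip by (simp add: sum.reindex)
  finally show ?thesis
    by (simp add: sum_negf)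
qed

lemma mixed_difference_const:
  assumes "finite A" "A \<noteq> {}"
  shows "mixed_difference (\<lambda>x. c) A = 0"
  using assms mixed_difference_eq_0_if_independent[of A _ "{}"]
  unfolding depends_only_on_def by auto

lemma depends_only_on_smax: "depends_only_on (\<lambda>x. smax x A) A"
  unfolding depends_only_on_def smax_def by (metis image_cong)

lemma smax_indicator:
  assumes "finite A" "A \<noteq> {}"
  shows "smax (indicator T) A = (if T \<inter> A = {} then 0 else 1)"
proof (cases "T \<inter> A = {}")
  case True
  then have "indicator T ` A = (\<lambda>_. 0::real) ` A"
    by (intro image_cong) (auto simp: indicator_def)
  then show ?thesis
    using True assms by (simp add: smax_def)
next
  case False
  then have "(1::real) \<in> indicator T ` A"
    by (force simp: image_iff)
  then show ?thesis
    using False assms by (auto simp: smax_def intro!: Max_eqI)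
qed

lemma mixed_difference_smax_self:
  assumes "finite A" "A \<noteq> {}"
  shows "mixed_difference (\<lambda>x. smax x A) A = -1"
proof -
  have "smax (indicator T) A = 1 - of_bool (T = {})" if "T \<in> Pow A" for T
    using that assms by (auto simp: smax_indicator Int_absorb2)
  then have "mixed_difference (\<lambda>x. smax x A) A
      = (\<Sum>T\<in>Pow A. (-1) ^ card T * 1 - (-1) ^ card T * of_bool (T = {}))"
    unfolding mixed_difference_def by (intro sum.cong) (auto simp: right_diff_distrib)
  also have "\<dots> = mixed_difference (\<lambda>x. 1) A - (\<Sum>T\<in>Pow A. (-1) ^ card T * of_bool (T = {}))"
    unfolding mixed_difference_def by (simp add: sum_subtractf)
  also have "\<dots> = -1"
    using assms by (simp add: mixed_difference_const sum.delta')
  finally show ?thesis .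
qed

lemma mixed_difference_smax:
  assumes "finite A" "finite A'" "A \<noteq> {}" "card A' \<le> card A"
  shows "mixed_difference (\<lambda>x. smax x A') A = (if A' = A then -1 else 0)"
proof (cases "A' = A")
  case True
  then show ?thesis
    using assms mixed_difference_smax_self by simp
next
  case False
  have "\<not> A \<subseteq> A'"
  proof
    assume "A \<subseteq> A'"
    then have "A = A'"
      using assms(2,4) card_mono card_subset_eq by (metis le_antisym)
    then show False
      using False by simp
  qed
  then obtain i where "i \<in> A" "i \<notin> A'"
    by blast
  then show ?thesis
    using False mixed_difference_eq_0_if_independent[OF assms(1) _ _ depends_only_on_smax] by simp
qed

lemma sum_C_eq_sum_subsets:
  "(\<Sum>j = 1..d choose r. g (C j r d)) = (\<Sum>A | A \<subseteq> {1..d} \<and> card A = r. g A)"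
proof -
  define R where "R = {A. A \<subseteq> {1..d} \<and> card A = r}"
  define L where "L = subsets_lex r d"
  have "finite R"
    unfolding R_def by (rule finite_subset[of _ "Pow {1..d}"]) auto
  have inj: "inj_on sorted_list_of_set R"
    by (rule inj_onI) (metis R_def finite_atLeastAtMost finite_subset mem_Collect_eq
        sorted_list_of_set.set_sorted_key_list_of_set)
  have set_L: "set L = sorted_list_of_set ` R" and "distinct L"
    unfolding L_def subsets_lex_def R_def[symmetric] using \<open>finite R\<close> by auto
  have "length L = card R"
    using \<open>distinct L\<close> inj by (simp add: set_L distinct_card[symmetric] card_image)
  then have length_L: "length L = d choose r"
    unfolding R_def using n_subsets[of "{1..d}" r] by simp
  have "(\<Sum>j = 1..d choose r. g (C j r d)) = (\<Sum>j<length L. g (set (L ! j)))"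
    unfolding C_def L_def[symmetric] length_L by (simp add: sum.atLeast1_atMost_eq)
  also have "\<dots> = sum_list (map (\<lambda>l. g (set l)) L)"
    by (simp add: sum_list_sum_nth atLeast0LessThan)
  also have "\<dots> = (\<Sum>l\<in>set L. g (set l))"
    using \<open>distinct L\<close> by (simp add: sum_list_distinct_conv_sum_set)
  also have "\<dots> = (\<Sum>A\<in>R. g (set (sorted_list_of_set A)))"
    unfolding set_L using inj by (simp add: sum.reindex)
  also have "\<dots> = (\<Sum>A\<in>R. g A)"
    by (rule sum.cong) (auto simp: R_def dest: finite_subset[OF _ finite_atLeastAtMost])
  finally show ?thesis
    unfolding R_def .
qed

lemma mixed_difference_S:
  assumes "A \<subseteq> {1..d}" "card A = r" "r \<ge> 1"
  shows "mixed_difference (\<lambda>x. S x r d) A = -1 / real (d choose r)"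
proof -
  define R where "R = {A. A \<subseteq> {1..d} \<and> card A = r}"
  have "finite R"
    unfolding R_def by (rule finite_subset[of _ "Pow {1..d}"]) auto
  have "A \<in> R" "finite A" "A \<noteq> {}"
    using assms finite_subset unfolding R_def by fastforce+
  have "mixed_difference (\<lambda>x. smax x A') A = (if A' = A then -1 else 0)" if "A' \<in> R" for A'
    using that assms \<open>finite A\<close> \<open>A \<noteq> {}\<close> finite_subset
    by (intro mixed_difference_smax) (auto simp: R_def)
  then have "(\<Sum>A'\<in>R. mixed_difference (\<lambda>x. smax x A') A) = -1"
    using \<open>finite R\<close> \<open>A \<in> R\<close> by (simp cong: sum.cong)
  moreover have "mixed_difference (\<lambda>x. S x r d) A
      = 1 / real (d choose r) * (\<Sum>A'\<in>R. mixed_difference (\<lambda>x. smax x A') A)"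
    unfolding S_def sum_C_eq_sum_subsets R_def[symmetric]
    by (simp only: mixed_difference_cmult mixed_difference_sum)
  ultimately show ?thesis
    by simp
qed

lemma mixed_difference_nonzero_imp_subset:
  assumes "\<And>x. F x = (\<Sum>k\<in>I. f k x)" "\<And>k. k \<in> I \<Longrightarrow> depends_only_on (f k) (B k)"
    and "finite A" "mixed_difference F A \<noteq> 0"
  obtains k where "k \<in> I" "A \<subseteq> B k"
proof -
  have "(\<Sum>k\<in>I. mixed_difference (f k) A) \<noteq> 0"
    using assms(4) unfolding assms(1) mixed_difference_sum .
  then obtain k where "k \<in> I" "mixed_difference (f k) A \<noteq> 0"
    by (meson sum.neutral)
  moreover have "A \<subseteq> B k"
    using calculation assms(2,3) mixed_difference_eq_0_if_independent by blast
  ultimately show thesis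
    using that by blast
qed

theorem theorem3:
  fixes d r K :: nat and f :: "nat \<Rightarrow> (nat \<Rightarrow> real) \<Rightarrow> real"
  assumes "d \<ge> 1" and "1 \<le> r" and "r \<le> d"
    and "order_r_decomposition r d (\<lambda>x. S x r d) f K"
  shows "K \<ge> d choose r"
proof -
  define R where "R = {A. A \<subseteq> {1..d} \<and> card A = r}"
  obtain B where B: "\<And>k. k \<in> {1..K} \<Longrightarrow>
      B k \<subseteq> {1..d} \<and> card (B k) = r \<and> depends_only_on (f k) (B k)"
    using assms(4) unfolding order_r_decomposition_def by metis
  have "R \<subseteq> B ` {1..K}"
  proof
    fix A assume "A \<in> R"
    then have A: "A \<subseteq> {1..d}" "card A = r" "finite A"
      unfolding R_def using finite_subset by auto
    have "mixed_difference (\<lambda>x. S x r d) A \<noteq> 0"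
      using mixed_difference_S[OF A(1,2) assms(2)] assms(3) by simp
    then obtain k where "k \<in> {1..K}" "A \<subseteq> B k"
      using assms(4) B A(3) mixed_difference_nonzero_imp_subset[where F = "\<lambda>x. S x r d" and I = "{1..K}"]
      unfolding order_r_decomposition_def by blast
    moreover have "finite (B k)" "card (B k) = r"
      using B[OF \<open>k \<in> {1..K}\<close>] finite_subset by auto
    ultimately show "A \<in> B ` {1..K}"
      using A(2) card_subset_eq by blast
  qed
  then have "card R \<le> K"
    using surj_card_le[of "{1..K}"] by (metis card_atLeastAtMost diff_Suc_1 finite_atLeastAtMost)
  then show ?thesis
    unfolding R_def n_subsets[OF finite_atLeastAtMost] by simp
qed

end
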